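(* For $\alpha=(\alpha_0,\alpha_1,\alpha_2)\in\mathbb N^3$ and $a,b>0$ with $a\ne b$, $$\mathfrak H_\alpha(a,b)=(-1)^{|\alpha|+1}[1^{\alpha_0+1},a^{\alpha_1+1},b^{\alpha_2+1}]\log=(-1)^{|\alpha|+1}[1^{\alpha_0},a^{\alpha_1+1},b^{\alpha_2+1}]\mathcal L_0=\frac{(-1)^{|\alpha|+\alpha_0+1}}{\alpha_1!\,\alpha_2!}\,\partial_a^{\alpha_1}\partial_b^{\alpha_2}\frac{\mathcal L_{\alpha_0}(b)-\mathcal L_{\alpha_0}(a)}{b-a}.$$ In particular $\mathfrak H_{(r,0,0)}(a,b)=-\frac{\mathcal L_r(b)-\mathcal L_r(a)}{b-a}$ for $r\in\mathbb N$.
   Context: $\mathfrak H_\alpha(a,b):=\int_0^\infty x^{|\alpha|+1}(1+x)^{-\alpha_0-1}(1+ax)^{-\alpha_1-1}(1+bx)^{-\alpha_2-1}\,dx$ for $a,b>0$, $|\alpha|=\alpha_0+\alpha_1+\alpha_2$. $\mathcal L_0(s)=\frac{\log s}{s-1}$ and for $r\in\mathbb N$, $\mathcal L_r(s):=(-1)^r[1^{r+1},s]\log$ (the "modified logarithm"). Divided differences: for $f$ smooth on an open interval, $[y_0]f=f(y_0)$, $[y_0,\dots,y_n]f=\int_{\{t\ge0,\sum t_j=1\}}f^{(n)}(\sum t_jy_j)\,dt_1\cdots dt_n$, defined also for repeated arguments; $[1^k,a^l,b^q]f$ denotes the divided difference with $k$ arguments $1$, $l$ arguments $a$, $q$ arguments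 $b$. *)

theory Defs
  imports "HOL-Analysis.Analysis"
begin

text \<open>Divided difference of f with argument list ys = [y_0, ..., y_n], defined
  (as in the paper) by the Hermite-Genocchi integral over the standard simplex
  {t_1,...,t_n >= 0, t_1+...+t_n <= 1}, with t_0 = 1 - (t_1+...+t_n).\<close>
definition divdiff :: "real list \<Rightarrow> (real \<Rightarrow> real) \<Rightarrow> real" where
  "divdiff ys f =
     (let n = length ys - 1 in
      \<integral>t. (if (\<forall>j\<in>{1..n}. 0 \<le> t j) \<and> (\<Sum>j=1..n. t j) \<le> 1
            then (deriv ^^ n) f ((1 - (\<Sum>j=1..n. t j)) * ys ! 0 + (\<Sum>j=1..n. t j * ys ! j))
            else 0)
        \<partial>(PiM {1..n} (\<lambda>_. lborel)))"

definition dd3 :: "nat \<Rightarrow> real \<Rightarrow> nat \<Rightarrow> real \<Rightarrow> nat \<Rightarrow> (real \<Rightarrow> real) \<Rightarrow> real" where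
  "dd3 k a l b q f = divdiff (replicate k 1 @ replicate l a @ replicate q b) f"

text \<open>L_0(s) = log s / (s - 1), extended by its limit value 1 at s = 1.\<close>
definition L0 :: "real \<Rightarrow> real" where
  "L0 s = (if s = 1 then 1 else ln s / (s - 1))"

definition Lmod :: "nat \<Rightarrow> real \<Rightarrow> real" where
  "Lmod r s = (if r = 0 then L0 s else (-1) ^ r * divdiff (replicate (r + 1) 1 @ [s]) ln)"

definition frakH :: "nat \<Rightarrow> nat \<Rightarrow> nat \<Rightarrow> real \<Rightarrow> real \<Rightarrow> real" where
  "frakH a0 a1 a2 a b =
     (LBINT x:{0<..}. x ^ (a0 + a1 + a2 + 1) /
        ((1 + x) ^ (a0 + 1) * (1 + a * x) ^ (a1 + 1) * (1 + b * x) ^ (a2 + 1)))"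

end

theory Submission
  imports Defs "HOL-Real_Asymp.Real_Asymp"
begin

text \<open>After the substitution x = t / (1 - t), the integral frakH a0 a1 a2 a b becomes
  the integral over [0, 1] of t^(N+1) (1 - t + t a)^-(a1+1) (1 - t + t b)^-(a2+1), with N = a0 + a1 + a2,
  and every other expression of the theorem is brought into this form. The derivatives of ln, L0 and of
  the modified logarithms are kernel integrals, i.e. integrals over [0, 1] of c(t) (1 - t + t s)^-q,
  which can be differentiated under the integral sign. In the Hermite--Genocchi integral of a divided
  difference of such a function the order of integration is exchanged: the inner simplex integral of
  n! / (\<Sum>j. t j y j)^(n+1) is the divided difference of (-1)^n / x, i.e. 1 / (\<Prod>j. y j),
  and what remains is again a one-dimensional integral of the above shape.\<close>

section \<open>Kernel integrals\<close>

lemma convex_comb_1_pos: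
  fixes t s :: real
  assumes "0 \<le> t" "t \<le> 1" "0 < s"
  shows "0 < 1 - t + t * s"
  using assms by (cases "t = 1") (auto intro: add_pos_nonneg)

lemma has_field_derivative_divide_power:
  fixes D :: "real \<Rightarrow> real"
  assumes "(D has_field_derivative d) (at x within U)" "D x \<noteq> 0"
  shows "((\<lambda>x. c / D x ^ q) has_field_derivative - real q * (d * c / D x ^ Suc q)) (at x within U)"
proof -
  have "((\<lambda>x. c / D x ^ q) has_field_derivative
     - (c * (real q * D x ^ (q - 1) * d)) / (D x ^ q * D x ^ q)) (at x within U)"
    using assms by (auto intro!: derivative_eq_intros)
  moreover have "- (c * (real q * D x ^ (q - 1) * d)) / (D x ^ q * D x ^ q) = - real q * (d * c / D x ^ Suc q)"
    using assms(2) by (cases q) (simp_all add: field_simps)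
  ultimately show ?thesis by simp
qed

definition kernel_integral :: "(real \<Rightarrow> real) \<Rightarrow> nat \<Rightarrow> real \<Rightarrow> real" where
  "kernel_integral c q s = integral {0..1} (\<lambda>t. c t / (1 - t + t * s) ^ q)"

lemma continuous_on_kernel_integrand:
  fixes c :: "real \<Rightarrow> real" and s :: real
  assumes "continuous_on {0..1} c" "0 < s"
  shows "continuous_on {0..1} (\<lambda>t. c t / (1 - t + t * s) ^ q)"
  using assms convex_comb_1_pos[of _ s] by (intro continuous_intros) force+

lemma kernel_integrand_integrable:
  fixes c :: "real \<Rightarrow> real" and s :: real
  assumes "continuous_on {0..1} c" "0 < s"
  shows "(\<lambda>t. c t / (1 - t + t * s) ^ q) integrable_on {0..1}"
  by (rule integrable_continuous_real[OF continuous_on_kernel_integrand[OF assms]])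

lemma kernel_integral_has_field_derivative:
  assumes c: "continuous_on {0..1} c" and s: "0 < s"
  shows "(kernel_integral c q has_field_derivative
           - real q * kernel_integral (\<lambda>t. t * c t) (Suc q) s) (at s)"
proof -
  define c' where "c' = (\<lambda>x t. - real q * (t * c t / (1 - t + t * x) ^ Suc q))"
  have cs: "continuous_on ({0<..} \<times> {0..1}) (\<lambda>p::real \<times> real. c (snd p))"
    by (rule continuous_on_compose2[OF c continuous_on_snd]) auto
  have "(kernel_integral c q has_field_derivative integral (cbox 0 1) (c' s)) (at s within {0<..})"
    unfolding kernel_integral_def cbox_interval[symmetric]
  proof (rule leibniz_rule_field_derivative)
    fix x t :: real assume x: "x \<in> {0<..}" and t: "t \<in> cbox 0 1"
    have "((\<lambda>x. 1 - t + t * x) has_field_derivative t) (at x within {0<..})"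
      by (auto intro!: derivative_eq_intros)
    from has_field_derivative_divide_power[OF this, of "c t" q]
    show "((\<lambda>x. c t / (1 - t + t * x) ^ q) has_field_derivative c' x t) (at x within {0<..})"
      using x t convex_comb_1_pos[of t x] unfolding c'_def by simp
  next
    fix x :: real assume "x \<in> {0<..}"
    then show "(\<lambda>t. c t / (1 - t + t * x) ^ q) integrable_on cbox 0 1"
      unfolding cbox_interval using kernel_integrand_integrable[OF c] by simp
  next
    have "\<forall>p\<in>{(0::real)<..} \<times> {(0::real)..1}. (1 - snd p + snd p * fst p) ^ Suc q \<noteq> 0"
      using convex_comb_1_pos by force
    then show "continuous_on ({0<..} \<times> cbox 0 1) (\<lambda>(x, t). c' x t)"
      unfolding cbox_interval c'_def case_prod_beta by (intro continuous_intros cs)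
  qed (use s in \<open>simp_all add: convex_real_interval\<close>)
  moreover have "integral (cbox 0 1) (c' s) = - real q * kernel_integral (\<lambda>t. t * c t) (Suc q) s"
    unfolding c'_def kernel_integral_def cbox_interval by (simp only: integral_mult_right)
  ultimately show ?thesis
    using s at_within_open[of s "{0<..}"] by simp
qed

lemma higher_deriv_kernel_integral:
  assumes "continuous_on {0..1} c" "0 < s"
  shows "(deriv ^^ k) (kernel_integral c q) s
           = (-1) ^ k * pochhammer (real q) k * kernel_integral (\<lambda>t. t ^ k * c t) (q + k) s"
  using assms(2)
proof (induction k arbitrary: s)
  case 0
  then show ?case by simp
next
  case (Suc k)
  define C where "C = (-1) ^ k * pochhammer (real q) k"
  define c' where "c' = (\<lambda>t::real. t ^ k * c t)"
  have c': "continuous_on {0..1} c'"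
    unfolding c'_def by (intro continuous_intros assms(1))
  have "eventually (\<lambda>y. y \<in> {0<..}) (nhds s)"
    using Suc.prems by (intro eventually_nhds_in_open) auto
  then have "eventually (\<lambda>y. (deriv ^^ k) (kernel_integral c q) y = C * kernel_integral c' (q + k) y) (nhds s)"
    by (rule eventually_mono) (use Suc.IH in \<open>simp add: C_def c'_def\<close>)
  then have "(deriv ^^ Suc k) (kernel_integral c q) s = deriv (\<lambda>y. C * kernel_integral c' (q + k) y) s"
    by (simp add: deriv_cong_ev)
  also have "\<dots> = C * (- real (q + k) * kernel_integral (\<lambda>t. t * c' t) (Suc (q + k)) s)"
    by (intro DERIV_imp_deriv DERIV_cmult kernel_integral_has_field_derivative c' Suc.prems)
  also have "\<dots> = (-1) ^ Suc k * pochhammer (real q) (Suc k)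
                    * kernel_integral (\<lambda>t. t ^ Suc k * c t) (q + Suc k) s"
    by (simp add: C_def c'_def pochhammer_Suc algebra_simps)
  finally show ?case .
qed

lemma higher_deriv_eq_kernel_integral:
  assumes "open U" "U \<subseteq> {0<..}" "\<And>y. y \<in> U \<Longrightarrow> f y = kernel_integral c q y" "x \<in> U"
    and "continuous_on {0..1} c"
  shows "(deriv ^^ k) f x = (-1) ^ k * pochhammer (real q) k * kernel_integral (\<lambda>t. t ^ k * c t) (q + k) x"
proof -
  have "eventually (\<lambda>y. f y = kernel_integral c q y) (nhds x)"
    using eventually_nhds_in_open[OF assms(1,4)] by (rule eventually_mono) (rule assms(3))
  then have "(deriv ^^ k) f x = (deriv ^^ k) (kernel_integral c q) x"
    by (rule higher_deriv_cong_ev) (rule refl)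
  also have "\<dots> = (-1) ^ k * pochhammer (real q) k * kernel_integral (\<lambda>t. t ^ k * c t) (q + k) x"
    using assms by (intro higher_deriv_kernel_integral) auto
  finally show ?thesis .
qed

section \<open>Integrals over the standard simplex\<close>

text \<open>A point of the simplex is given by its coordinates t j, j \<in> J; the remaining weight
  1 - (\<Sum>j\<in>J. t j) belongs to the node z 0, as in the definition of divdiff. Hence 0 \<notin> J.\<close>

definition in_simplex :: "nat set \<Rightarrow> (nat \<Rightarrow> real) \<Rightarrow> bool" where
  "in_simplex J t \<longleftrightarrow> (\<forall>j\<in>J. 0 \<le> t j) \<and> (\<Sum>j\<in>J. t j) \<le> 1"

definition simplex_comb :: "nat set \<Rightarrow> (nat \<Rightarrow> real) \<Rightarrow> (nat \<Rightarrow> real) \<Rightarrow> real" where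
  "simplex_comb J z t = (1 - (\<Sum>j\<in>J. t j)) * z 0 + (\<Sum>j\<in>J. t j * z j)"

abbreviation PiM_lborel :: "nat set \<Rightarrow> (nat \<Rightarrow> real) measure" where
  "PiM_lborel J \<equiv> PiM J (\<lambda>_. lborel)"

lemma in_simplex_measurable [measurable]:
  assumes "finite J"
  shows "Measurable.pred (PiM_lborel J) (in_simplex J)"
proof -
  have "{t \<in> space (PiM_lborel J). in_simplex J t}
          = Pi\<^sub>E J (\<lambda>_. {0..}) \<inter> (\<lambda>t. sum t J) -` {..1} \<inter> space (PiM_lborel J)"
    by (auto simp: in_simplex_def space_PiM)
  also have "\<dots> \<in> sets (PiM_lborel J)"
    using assms by measurable
  finally show ?thesis
    by (simp add: pred_def)
qed

lemma simplex_comb_measurable [measurable]: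
  "finite J \<Longrightarrow> simplex_comb J z \<in> borel_measurable (PiM_lborel J)"
  unfolding simplex_comb_def by measurable

lemma in_simplex_le_1: "in_simplex J t \<Longrightarrow> finite J \<Longrightarrow> j \<in> J \<Longrightarrow> t j \<le> 1"
  unfolding in_simplex_def using member_le_sum[of j J t] by auto

lemma in_simplex_imp_PiE:
  "in_simplex J t \<Longrightarrow> finite J \<Longrightarrow> t \<in> space (PiM_lborel J) \<Longrightarrow> t \<in> Pi\<^sub>E J (\<lambda>_. {0..1})"
  using in_simplex_le_1[of J t] by (auto simp: in_simplex_def space_PiM PiE_iff)

lemma simplex_comb_ge:
  assumes "in_simplex J t" "finite J" "\<And>j. j \<in> insert 0 J \<Longrightarrow> \<mu> \<le> z j"
  shows "\<mu> \<le> simplex_comb J z t"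
proof -
  have t: "(\<Sum>j\<in>J. t j) \<le> 1" "\<forall>j\<in>J. 0 \<le> t j"
    using assms(1) unfolding in_simplex_def by auto
  have "\<mu> = (1 - (\<Sum>j\<in>J. t j)) * \<mu> + (\<Sum>j\<in>J. t j * \<mu>)"
    using sum_distrib_right[of t J \<mu>] by (simp add: algebra_simps)
  also have "\<dots> \<le> simplex_comb J z t"
    unfolding simplex_comb_def using t assms(3)
    by (intro add_mono mult_left_mono sum_mono) auto
  finally show ?thesis .
qed

lemma simplex_comb_pos:
  assumes "in_simplex J t" "finite J" "\<And>j. j \<in> insert 0 J \<Longrightarrow> 0 < z j"
  shows "0 < simplex_comb J z t"
proof -
  have "0 < Min (z ` insert 0 J)"
    using assms(2,3) by auto
  also have "\<dots> \<le> simplex_comb J z t"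
    using assms(1,2) by (rule simplex_comb_ge) (use assms(2) in auto)
  finally show ?thesis .
qed

lemma sum_mult_fun_upd_insert:
  fixes t w :: "'a \<Rightarrow> 'b::comm_semiring_1"
  assumes "finite J" "i \<notin> J"
  shows "(\<Sum>j\<in>insert i J. (t(i := y)) j * w j) = y * w i + (\<Sum>j\<in>J. t j * w j)"
proof -
  have "(\<Sum>j\<in>J. (t(i := y)) j * w j) = (\<Sum>j\<in>J. t j * w j)"
    using assms(2) by (intro sum.cong) auto
  then show ?thesis
    using assms by simp
qed

lemma sum_fun_upd_insert:
  fixes t :: "'a \<Rightarrow> 'b::comm_semiring_1"
  shows "finite J \<Longrightarrow> i \<notin> J \<Longrightarrow> (\<Sum>j\<in>insert i J. (t(i := y)) j) = y + (\<Sum>j\<in>J. t j)"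
  using sum_mult_fun_upd_insert[of J i t y "\<lambda>_. 1"] by simp

lemma in_simplex_upd_insert:
  assumes "finite J" "i \<notin> J"
  shows "in_simplex (insert i J) (t(i := y)) \<longleftrightarrow> in_simplex J t \<and> y \<in> {0..1 - (\<Sum>j\<in>J. t j)}"
proof -
  show ?thesis
    unfolding in_simplex_def sum_fun_upd_insert[OF assms] using assms sum_nonneg[of J t] by auto
qed

lemma simplex_comb_upd_insert:
  assumes "finite J" "i \<notin> J" "i \<noteq> 0"
  shows "simplex_comb (insert i J) z (t(i := y)) = simplex_comb J z t + y * (z i - z 0)"
  unfolding simplex_comb_def sum_mult_fun_upd_insert[OF assms(1,2)] sum_fun_upd_insert[OF assms(1,2)] using assms(3)
  by (simp add: algebra_simps)

lemma simplex_comb_upd_0: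
  assumes "0 \<notin> J"
  shows "simplex_comb J (z(0 := w)) t = simplex_comb J z t + (1 - (\<Sum>j\<in>J. t j)) * (w - z 0)"
proof -
  have "(\<Sum>j\<in>J. t j * (z(0 := w)) j) = (\<Sum>j\<in>J. t j * z j)"
    using assms by (intro sum.cong) auto
  then show ?thesis
    unfolding simplex_comb_def by (simp add: algebra_simps)
qed

lemma simplex_comb_affine:
  "simplex_comb J (\<lambda>j. 1 - x + x * z j) t = 1 - x + x * simplex_comb J z t"
proof -
  have "(\<Sum>j\<in>J. t j * (1 - x + x * z j)) = (1 - x) * (\<Sum>j\<in>J. t j) + x * (\<Sum>j\<in>J. t j * z j)"
    by (simp add: algebra_simps sum.distrib sum_distrib_left sum_subtractf)
  then show ?thesis
    unfolding simplex_comb_def by (simp add: algebra_simps)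
qed

lemma emeasure_PiM_lborel_unit_cube:
  assumes "finite J"
  shows "emeasure (PiM_lborel J) (Pi\<^sub>E J (\<lambda>_. {0..1})) = 1"
proof -
  interpret product_sigma_finite "\<lambda>_. lborel :: real measure"
    by standard
  show ?thesis
    using assms by (subst emeasure_PiM) auto
qed

lemma integrable_simplex_bounded:
  fixes f :: "(nat \<Rightarrow> real) \<Rightarrow> real"
  assumes J: "finite J" and f[measurable]: "f \<in> borel_measurable (PiM_lborel J)"
    and B: "\<And>t. in_simplex J t \<Longrightarrow> \<bar>f t\<bar> \<le> B"
  shows "integrable (PiM_lborel J) (\<lambda>t. if in_simplex J t then f t else 0)"
proof (rule integrableI_bounded_set[where A = "Pi\<^sub>E J (\<lambda>_. {0..1})" and B = B])
  show "Pi\<^sub>E J (\<lambda>_. {0..1}) \<in> sets (PiM_lborel J)"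
    using J by measurable
  show "emeasure (PiM_lborel J) (Pi\<^sub>E J (\<lambda>_. {0..1})) < \<infinity>"
    using J by (simp add: emeasure_PiM_lborel_unit_cube)
  show "AE t in PiM_lborel J. t \<in> Pi\<^sub>E J (\<lambda>_. {0..1}) \<longrightarrow> norm (if in_simplex J t then f t else 0) \<le> B"
    using B order_trans[OF abs_ge_zero B[of "\<lambda>_. 0"]] by (intro AE_I2) (auto simp: in_simplex_def)
  show "AE t in PiM_lborel J. t \<notin> Pi\<^sub>E J (\<lambda>_. {0..1}) \<longrightarrow> (if in_simplex J t then f t else 0) = 0"
    using in_simplex_imp_PiE[OF _ J] by (intro AE_I2) auto
qed (use J in measurable)

lemma integrable_simplex_inverse_power:
  assumes J: "finite J" and z: "\<And>j. j \<in> insert 0 J \<Longrightarrow> 0 < z j"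
  shows "integrable (PiM_lborel J) (\<lambda>t. if in_simplex J t then c / simplex_comb J z t ^ m else 0)"
proof (rule integrable_simplex_bounded[OF J])
  define \<mu> where "\<mu> = Min (z ` insert 0 J)"
  have \<mu>: "0 < \<mu>" "\<And>j. j \<in> insert 0 J \<Longrightarrow> \<mu> \<le> z j"
    using J z unfolding \<mu>_def by auto
  fix t assume "in_simplex J t"
  then have "\<mu> \<le> simplex_comb J z t"
    by (rule simplex_comb_ge) (use J \<mu> in auto)
  moreover from this have "\<mu> ^ m \<le> simplex_comb J z t ^ m"
    using \<mu> by (intro power_mono) auto
  ultimately show "\<bar>c / simplex_comb J z t ^ m\<bar> \<le> \<bar>c\<bar> / \<mu> ^ m"
    using \<mu> by (simp add: abs_divide power_abs frac_le)
qed (use J in measurable)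

lemma integral_PiM_empty: "(\<integral>t. f t \<partial>PiM_lborel {}) = f (\<lambda>_. undefined)"
  by (simp add: PiM_empty lebesgue_integral_count_space_finite)

lemma integral_simplex_power:
  "finite J \<Longrightarrow> (\<integral>t. (if in_simplex J t then (1 - (\<Sum>j\<in>J. t j)) ^ k else 0) \<partial>PiM_lborel J)
                  = fact k / fact (card J + k)"
proof (induction J arbitrary: k rule: finite_induct)
  case empty
  then show ?case
    by (subst integral_PiM_empty) (simp add: in_simplex_def)
next
  case (insert i J k)
  interpret product_sigma_finite "\<lambda>_. lborel :: real measure"
    by standard
  let ?F = "\<lambda>J k t. if in_simplex J t then (1 - (\<Sum>j\<in>J. t j)) ^ k else 0"
  have "integrable (PiM_lborel (insert i J)) (?F (insert i J) k)"
  proof (rule integrable_simplex_bounded[where B = 1])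
    fix t assume "in_simplex (insert i J) t"
    then have "0 \<le> 1 - (\<Sum>j\<in>insert i J. t j)" "1 - (\<Sum>j\<in>insert i J. t j) \<le> 1"
      using sum_nonneg[of "insert i J" t] by (auto simp: in_simplex_def)
    then show "\<bar>(1 - (\<Sum>j\<in>insert i J. t j)) ^ k\<bar> \<le> 1"
      by (simp add: power_le_one)
  qed (use insert in auto)
  then have "(\<integral>t. ?F (insert i J) k t \<partial>PiM_lborel (insert i J))
               = (\<integral>t. (\<integral>y. ?F (insert i J) k (t(i := y)) \<partial>lborel) \<partial>PiM_lborel J)"
    by (rule product_integral_insert[OF insert(1,2)])
  also have "\<dots> = (\<integral>t. ?F J (Suc k) t / real (Suc k) \<partial>PiM_lborel J)"
  proof (rule Bochner_Integration.integral_cong[OF refl])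
    fix t :: "nat \<Rightarrow> real"
    define s where "s = (\<Sum>j\<in>J. t j)"
    have eq: "?F (insert i J) k (t(i := y))
                = (if in_simplex J t then (1 - s - y) ^ k * indicator {0..1 - s} y else 0)" for y
      unfolding in_simplex_upd_insert[OF insert(1,2)] sum_fun_upd_insert[OF insert(1,2)] s_def
      by (auto simp: indicator_def algebra_simps)
    show "(\<integral>y. ?F (insert i J) k (t(i := y)) \<partial>lborel) = ?F J (Suc k) t / real (Suc k)"
    proof (cases "in_simplex J t")
      case True
      then have "0 \<le> 1 - s"
        unfolding in_simplex_def s_def by auto
      then have "(\<integral>y. (1 - s - y) ^ k * indicator {0..1 - s} y \<partial>lborel)
                   = - ((1 - s - (1 - s)) ^ Suc k / Suc k) - - ((1 - s - 0) ^ Suc k / Suc k)"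
        by (intro integral_FTC_Icc_real) (rule derivative_eq_intros refl | simp)+
      then show ?thesis
        unfolding eq using True by (simp add: s_def)
    qed (simp add: eq)
  qed
  also have "\<dots> = fact (Suc k) / fact (card J + Suc k) / real (Suc k)"
    by (simp only: integral_divide_zero insert.IH)
  also have "\<dots> = fact k / fact (card (insert i J) + k)"
    using insert(1,2) by (simp add: fact_Suc[of k] del: fact_Suc)
  finally show ?case .
qed

lemma integral_inverse_power_segment:
  fixes A d h :: real
  assumes h: "0 \<le> h" and d: "d \<noteq> 0" and pos: "\<And>y. y \<in> {0..h} \<Longrightarrow> 0 < A + y * d"
  shows "(\<integral>y. fact (Suc n) / (A + y * d) ^ Suc (Suc n) * indicator {0..h} y \<partial>lborel)
           = (fact n / A ^ Suc n - fact n / (A + h * d) ^ Suc n) / d"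
proof -
  define G where "G = (\<lambda>y. - (fact n / d) / (A + y * d) ^ Suc n)"
  have "(\<integral>y. fact (Suc n) / (A + y * d) ^ Suc (Suc n) * indicator {0..h} y \<partial>lborel) = G h - G 0"
  proof (rule integral_FTC_Icc_real[OF h])
    fix y :: real assume y: "0 \<le> y" "y \<le> h"
    have "((\<lambda>y. A + y * d) has_real_derivative d) (at y)"
      by (auto intro!: derivative_eq_intros)
    from has_field_derivative_divide_power[OF this, of "- (fact n / d)" "Suc n"]
    have "(G has_real_derivative - real (Suc n) * (d * - (fact n / d) / (A + y * d) ^ Suc (Suc n))) (at y)"
      unfolding G_def using pos[of y] y by simp
    moreover have "- real (Suc n) * (d * - (fact n / d) / X) = fact (Suc n) / X" for X
      using d by (cases "X = 0") (simp_all add: fact_Suc[of n] field_simps del: fact_Suc)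
    ultimately show "(G has_real_derivative fact (Suc n) / (A + y * d) ^ Suc (Suc n)) (at y)"
      by simp
    show "isCont (\<lambda>y. fact (Suc n) / (A + y * d) ^ Suc (Suc n)) y"
      using pos[of y] y by (intro continuous_intros) auto
  qed
  also have "G h - G 0 = (fact n / A ^ Suc n - fact n / (A + h * d) ^ Suc n) / d"
    unfolding G_def by (simp add: diff_divide_distrib ac_simps)
  finally show ?thesis .
qed

text \<open>By the Hermite--Genocchi formula this is the divided difference of x \<mapsto> (-1)^n / x,
  n = card J, at the nodes z j, j \<in> insert 0 J.\<close>

definition simplex_recip_integral :: "nat set \<Rightarrow> (nat \<Rightarrow> real) \<Rightarrow> real" where
  "simplex_recip_integral J z =
     (\<integral>t. (if in_simplex J t then fact (card J) / simplex_comb J z t ^ Suc (card J) else 0)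
        \<partial>PiM_lborel J)"

lemma simplex_recip_integral_const:
  assumes "finite J" "\<And>j. j \<in> J \<Longrightarrow> z j = z 0"
  shows "simplex_recip_integral J z = 1 / z 0 ^ Suc (card J)"
proof -
  have comb: "simplex_comb J z t = z 0" for t
    using sum_distrib_right[of t J "z 0"] assms(2) unfolding simplex_comb_def
    by (simp add: algebra_simps)
  have "simplex_recip_integral J z
          = (\<integral>t. fact (card J) / z 0 ^ Suc (card J)
                  * (if in_simplex J t then (1 - (\<Sum>j\<in>J. t j)) ^ 0 else 0) \<partial>PiM_lborel J)"
    unfolding simplex_recip_integral_def comb by (intro Bochner_Integration.integral_cong) auto
  also have "\<dots> = 1 / z 0 ^ Suc (card J)"
    by (simp only: integral_mult_right_zero integral_simplex_power[OF assms(1)]) simp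
  finally show ?thesis .
qed

text \<open>Integrating out the coordinate t i yields the recursion of divided differences.\<close>

lemma simplex_recip_integral_insert:
  assumes J: "finite J" "0 \<notin> J" and i: "i \<notin> J" "i \<noteq> 0" "z i \<noteq> z 0"
    and z: "\<And>j. j \<in> insert 0 (insert i J) \<Longrightarrow> 0 < z j"
  shows "simplex_recip_integral (insert i J) z
           = (simplex_recip_integral J z - simplex_recip_integral J (z(0 := z i))) / (z i - z 0)"
proof -
  interpret product_sigma_finite "\<lambda>_. lborel :: real measure"
    by standard
  define n where "n = card J"
  define d where "d = z i - z 0"
  have card: "card (insert i J) = Suc n"
    using J i unfolding n_def by simp
  let ?F = "\<lambda>t. if in_simplex (insert i J) t then fact (Suc n) / simplex_comb (insert i J) z t ^ Suc (Suc n) else 0"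
  let ?F1 = "\<lambda>z t. if in_simplex J t then fact n / simplex_comb J z t ^ Suc n else 0"
  have int: "integrable (PiM_lborel (insert i J)) ?F"
    using J z by (intro integrable_simplex_inverse_power) auto
  have int1: "integrable (PiM_lborel J) (?F1 z)" "integrable (PiM_lborel J) (?F1 (z(0 := z i)))"
    using J z by (auto intro!: integrable_simplex_inverse_power)
  have "simplex_recip_integral (insert i J) z
          = (\<integral>t. (\<integral>y. ?F (t(i := y)) \<partial>lborel) \<partial>PiM_lborel J)"
    unfolding simplex_recip_integral_def card by (rule product_integral_insert[OF J(1) i(1) int])
  also have "\<dots> = (\<integral>t. (?F1 z t - ?F1 (z(0 := z i)) t) / d \<partial>PiM_lborel J)"
  proof (rule Bochner_Integration.integral_cong[OF refl])
    fix t :: "nat \<Rightarrow> real"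
    define s where "s = (\<Sum>j\<in>J. t j)"
    define A where "A = simplex_comb J z t"
    have comb: "simplex_comb (insert i J) z (t(i := y)) = A + y * d" for y
      unfolding A_def d_def by (rule simplex_comb_upd_insert[OF J(1) i(1,2)])
    have eq: "?F (t(i := y))
                = (if in_simplex J t then fact (Suc n) / (A + y * d) ^ Suc (Suc n) * indicator {0..1 - s} y
                   else 0)" for y
      unfolding in_simplex_upd_insert[OF J(1) i(1)] comb s_def by (auto simp: indicator_def)
    show "(\<integral>y. ?F (t(i := y)) \<partial>lborel) = (?F1 z t - ?F1 (z(0 := z i)) t) / d"
    proof (cases "in_simplex J t")
      case True
      have pos: "0 < A + y * d" if "y \<in> {0..1 - s}" for y
      proof -
        have "in_simplex (insert i J) (t(i := y))"
          unfolding in_simplex_upd_insert[OF J(1) i(1)] using True that s_def by auto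
        then show ?thesis
          using simplex_comb_pos[of "insert i J" _ z] J z comb by force
      qed
      have end1: "A + (1 - s) * d = simplex_comb J (z(0 := z i)) t"
        unfolding A_def s_def d_def simplex_comb_upd_0[OF J(2)] by (simp add: algebra_simps)
      have "0 \<le> 1 - s"
        using True unfolding in_simplex_def s_def by auto
      from integral_inverse_power_segment[OF this _ pos]
      show ?thesis
        unfolding eq end1 using True i(3) by (simp add: A_def d_def)
    qed (simp add: eq)
  qed
  also have "\<dots> = ((\<integral>t. ?F1 z t \<partial>PiM_lborel J) - (\<integral>t. ?F1 (z(0 := z i)) t \<partial>PiM_lborel J)) / d"
    by (simp only: integral_divide_zero Bochner_Integration.integral_diff[OF int1])
  also have "\<dots> = (simplex_recip_integral J z - simplex_recip_integral J (z(0 := z i))) / d"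
    unfolding simplex_recip_integral_def n_def ..
  finally show ?thesis
    unfolding d_def .
qed

lemma simplex_recip_integral_eq:
  assumes "finite J" "0 \<notin> J" "\<And>j. j \<in> insert 0 J \<Longrightarrow> 0 < z j"
  shows "simplex_recip_integral J z = 1 / (\<Prod>j\<in>insert 0 J. z j)"
  using assms
proof (induction "card J" arbitrary: J z)
  case 0
  then show ?case
    using simplex_recip_integral_const[of "{}" z] by simp
next
  case (Suc n J z)
  show ?case
  proof (cases "\<exists>i\<in>J. z i \<noteq> z 0")
    case True
    then obtain i where i: "i \<in> J" "z i \<noteq> z 0"
      by blast
    define J' where "J' = J - {i}"
    have J': "J = insert i J'" "i \<notin> J'" "finite J'" "0 \<notin> J'" "n = card J'"
      using i Suc.prems Suc.hyps(2) unfolding J'_def by (auto simp: card_Diff_singleton)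
    have i0: "i \<noteq> 0"
      using i(1) Suc.prems(2) by metis
    define P where "P = (\<Prod>j\<in>J'. z j)"
    have pos: "0 < z 0" "0 < z i" "0 < P"
      using Suc.prems(3) J'(1) unfolding P_def by (auto intro!: prod_pos)
    have z: "\<And>j. j \<in> insert 0 J' \<Longrightarrow> 0 < z j" "\<And>j. j \<in> insert 0 J' \<Longrightarrow> 0 < (z(0 := z i)) j"
      using Suc.prems(3) J'(1) pos by auto
    have "simplex_recip_integral J' z = 1 / (\<Prod>j\<in>insert 0 J'. z j)"
      "simplex_recip_integral J' (z(0 := z i)) = 1 / (\<Prod>j\<in>insert 0 J'. (z(0 := z i)) j)"
      by (rule Suc.hyps(1); use J' z in auto)+
    moreover have "(\<Prod>j\<in>J'. (z(0 := z i)) j) = P"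
      unfolding P_def using J'(4) by (intro prod.cong) auto
    ultimately have IH: "simplex_recip_integral J' z = 1 / (z 0 * P)"
        "simplex_recip_integral J' (z(0 := z i)) = 1 / (z i * P)"
      using J'(3,4) by (simp_all add: P_def)
    have "simplex_recip_integral J z = (1 / (z 0 * P) - 1 / (z i * P)) / (z i - z 0)"
      unfolding J'(1) IH[symmetric]
      by (rule simplex_recip_integral_insert) (use J' i i0 Suc.prems(3) in auto)
    also have "\<dots> = 1 / (z 0 * (z i * P))"
      using pos i(2) by (simp add: field_simps)
    also have "z 0 * (z i * P) = (\<Prod>j\<in>insert 0 J. z j)"
      unfolding P_def J'(1) using J'(2-4) i0 by simp
    finally show ?thesis .
  next
    case False
    then have "(\<Prod>j\<in>J. z j) = (\<Prod>j\<in>J. z 0)"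
      by (intro prod.cong) auto
    then have "(\<Prod>j\<in>insert 0 J. z j) = z 0 ^ Suc (card J)"
      using Suc.prems(1,2) by simp
    then show ?thesis
      using False Suc.prems(1) by (simp add: simplex_recip_integral_const)
  qed
qed

section \<open>Divided differences of kernel integrals\<close>

lemma integral_eq_lborel_indicator_Icc:
  fixes g :: "real \<Rightarrow> real"
  assumes "continuous_on {a..b} g"
  shows "integral {a..b} g = (\<integral>x. indicator {a..b} x * g x \<partial>lborel)"
  using set_borel_integral_eq_integral(2)[OF borel_integrable_atLeastAtMost'[OF assms]]
  by (simp add: set_lebesgue_integral_def)

lemma prod_list_map_conv_prod_nth: "prod_list (map g xs) = (\<Prod>j<length xs. g (xs ! j))"
  by (induction xs) (simp_all add: prod.lessThan_Suc_shift del: prod.lessThan_Suc)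

lemma abs_kernel_integrand_le:
  fixes x \<nu> L :: real
  assumes x: "x \<in> {0..1}" and \<nu>: "0 < \<nu>" "\<nu> \<le> 1" "\<nu> \<le> L"
  shows "\<bar>x ^ m / (1 - x + x * L) ^ q\<bar> \<le> 1 / \<nu> ^ q"
proof -
  have "\<nu> \<le> 1 - x + x * L"
    using x \<nu> mult_left_mono[of \<nu> L x] mult_left_mono[of \<nu> 1 "1 - x"] by (auto simp: algebra_simps)
  then have "\<nu> ^ q \<le> \<bar>1 - x + x * L\<bar> ^ q"
    using \<nu>(1) by (intro power_mono) auto
  then have "\<bar>x ^ m / (1 - x + x * L) ^ q\<bar> \<le> \<bar>x ^ m\<bar> / \<nu> ^ q"
    unfolding abs_divide power_abs using \<nu>(1) by (intro frac_le) auto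
  also have "\<dots> \<le> 1 / \<nu> ^ q"
    using x \<nu>(1) by (intro divide_right_mono) (auto simp: power_abs intro: power_le_one)
  finally show ?thesis .
qed

lemma integrable_simplex_kernel:
  assumes J: "finite J" and z: "\<And>j. j \<in> insert 0 J \<Longrightarrow> 0 < z j"
  shows "integrable (PiM_lborel J \<Otimes>\<^sub>M lborel)
           (\<lambda>(t, x). if in_simplex J t then indicator {0..1} x * (x ^ m / (1 - x + x * simplex_comb J z t) ^ q)
                      else 0)"
    (is "integrable _ ?\<Phi>")
proof -
  interpret FP: finite_product_sigma_finite "\<lambda>_. lborel :: real measure" J
    by standard (rule J)
  interpret P: pair_sigma_finite "PiM_lborel J" "lborel :: real measure" ..
  define \<mu> where "\<mu> = Min (z ` insert 0 J)"
  have \<mu>: "0 < \<mu>" "\<And>j. j \<in> insert 0 J \<Longrightarrow> \<mu> \<le> z j"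
    using J z unfolding \<mu>_def by auto
  define \<nu> where "\<nu> = min 1 \<mu>"
  have \<nu>: "0 < \<nu>" "\<nu> \<le> 1" "\<And>j. j \<in> insert 0 J \<Longrightarrow> \<nu> \<le> z j"
    using \<mu> unfolding \<nu>_def by force+
  let ?A = "Pi\<^sub>E J (\<lambda>_. {0..1::real}) \<times> {0..1::real}"
  show ?thesis
  proof (rule integrableI_bounded_set[where A = ?A and B = "1 / \<nu> ^ q"])
    show "?A \<in> sets (PiM_lborel J \<Otimes>\<^sub>M lborel)"
      using J by measurable
    show "?\<Phi> \<in> borel_measurable (PiM_lborel J \<Otimes>\<^sub>M lborel)"
      unfolding case_prod_beta using J by measurable
    have "emeasure (PiM_lborel J \<Otimes>\<^sub>M lborel) ?A
            = emeasure (PiM_lborel J) (Pi\<^sub>E J (\<lambda>_. {0..1})) * emeasure lborel {0..1::real}"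
      using J by (intro lborel.emeasure_pair_measure_Times) measurable
    then show "emeasure (PiM_lborel J \<Otimes>\<^sub>M lborel) ?A < \<infinity>"
      using J by (simp add: emeasure_PiM_lborel_unit_cube)
    show "AE p in PiM_lborel J \<Otimes>\<^sub>M lborel. p \<in> ?A \<longrightarrow> norm (?\<Phi> p) \<le> 1 / \<nu> ^ q"
    proof (intro AE_I2 impI)
      fix p :: "(nat \<Rightarrow> real) \<times> real"
      obtain t x where p: "p = (t, x)"
        by (cases p)
      show "norm (?\<Phi> p) \<le> 1 / \<nu> ^ q"
      proof (cases "in_simplex J t \<and> x \<in> {0..1}")
        case True
        have "\<nu> \<le> simplex_comb J z t"
          by (rule simplex_comb_ge[of J t \<nu> z]) (use True J \<nu>(3) in auto)
        then show ?thesis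
          using True \<nu>(1,2) abs_kernel_integrand_le[of x \<nu>] unfolding p by simp
      next
        case False
        then have "?\<Phi> p = 0"
          unfolding p by auto
        then show ?thesis
          using \<nu>(1) by simp
      qed
    qed
    show "AE p in PiM_lborel J \<Otimes>\<^sub>M lborel. p \<notin> ?A \<longrightarrow> ?\<Phi> p = 0"
    proof (intro AE_I2 impI)
      fix p assume p: "p \<in> space (PiM_lborel J \<Otimes>\<^sub>M lborel)" "p \<notin> ?A"
      obtain t x where tx: "p = (t, x)"
        by (cases p)
      have "t \<in> space (PiM_lborel J)"
        using p(1) tx by (simp add: space_pair_measure)
      then have "\<not> (in_simplex J t \<and> x \<in> {0..1})"
        using in_simplex_imp_PiE[OF _ J] p(2) tx by auto
      then show "?\<Phi> p = 0"
        unfolding tx by auto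
    qed
  qed
qed

lemma integral_simplex_kernel_integral:
  assumes J: "finite J" "0 \<notin> J" and z: "\<And>j. j \<in> insert 0 J \<Longrightarrow> 0 < z j"
  shows "(\<integral>t. (if in_simplex J t then kernel_integral (\<lambda>x. x ^ m) (Suc (card J)) (simplex_comb J z t) else 0)
            \<partial>PiM_lborel J)
         = integral {0..1} (\<lambda>x. x ^ m / (\<Prod>j\<in>insert 0 J. 1 - x + x * z j)) / fact (card J)"
proof -
  interpret FP: finite_product_sigma_finite "\<lambda>_. lborel :: real measure" J
    by standard (rule J)
  interpret P: pair_sigma_finite "PiM_lborel J" "lborel :: real measure" ..
  define q where "q = Suc (card J)"
  define \<Phi> where "\<Phi> = (\<lambda>t x. if in_simplex J t
                                then indicator {0..1} x * (x ^ m / (1 - x + x * simplex_comb J z t) ^ q)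
                                else (0::real))"
  have nz: "0 < (\<Prod>j\<in>insert 0 J. 1 - x + x * z j)" if "x \<in> {0..1}" for x
    using z that by (intro prod_pos convex_comb_1_pos) auto
  have "(\<integral>t. (if in_simplex J t then kernel_integral (\<lambda>x. x ^ m) q (simplex_comb J z t) else 0) \<partial>PiM_lborel J)
          = (\<integral>t. (\<integral>x. \<Phi> t x \<partial>lborel) \<partial>PiM_lborel J)"
  proof (intro Bochner_Integration.integral_cong refl)
    fix t
    show "(if in_simplex J t then kernel_integral (\<lambda>x. x ^ m) q (simplex_comb J z t) else 0)
            = (\<integral>x. \<Phi> t x \<partial>lborel)"
    proof (cases "in_simplex J t")
      case True
      have "continuous_on {0..1} (\<lambda>x. x ^ m / (1 - x + x * simplex_comb J z t) ^ q)"
        using simplex_comb_pos[of J t z, OF True J(1) z] by (intro continuous_on_kernel_integrand continuous_intros)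
      then show ?thesis
        using True unfolding \<Phi>_def kernel_integral_def by (simp add: integral_eq_lborel_indicator_Icc)
    qed (simp add: \<Phi>_def)
  qed
  also have "\<dots> = (\<integral>x. (\<integral>t. \<Phi> t x \<partial>PiM_lborel J) \<partial>lborel)"
    using integrable_simplex_kernel[of J z m q, OF J(1) z]
    by (intro P.Fubini_integral[symmetric]) (simp add: \<Phi>_def case_prod_beta)
  also have "\<dots> = (\<integral>x. indicator {0..1} x * (x ^ m / (\<Prod>j\<in>insert 0 J. 1 - x + x * z j) / fact (card J))
                     \<partial>lborel)"
  proof (rule Bochner_Integration.integral_cong[OF refl])
    fix x :: real
    show "(\<integral>t. \<Phi> t x \<partial>PiM_lborel J)
            = indicator {0..1} x * (x ^ m / (\<Prod>j\<in>insert 0 J. 1 - x + x * z j) / fact (card J))"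
    proof (cases "x \<in> {0..1}")
      case True
      have zx: "\<And>j. j \<in> insert 0 J \<Longrightarrow> 0 < 1 - x + x * z j"
        using True z by (intro convex_comb_1_pos) auto
      have "(\<integral>t. \<Phi> t x \<partial>PiM_lborel J)
              = x ^ m / fact (card J) * simplex_recip_integral J (\<lambda>j. 1 - x + x * z j)"
        unfolding simplex_recip_integral_def integral_mult_right_zero[symmetric] \<Phi>_def q_def
        using True by (intro Bochner_Integration.integral_cong) (auto simp: simplex_comb_affine)
      moreover have "simplex_recip_integral J (\<lambda>j. 1 - x + x * z j) = 1 / (\<Prod>j\<in>insert 0 J. 1 - x + x * z j)"
        by (rule simplex_recip_integral_eq) (use J zx in auto)
      ultimately show ?thesis
        using True by simp
    next
      case False
      then have "\<Phi> t x = 0" for t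
        unfolding \<Phi>_def by simp
      then show ?thesis
        using False by simp
    qed
  qed
  also have "\<dots> = integral {0..1} (\<lambda>x. x ^ m / (\<Prod>j\<in>insert 0 J. 1 - x + x * z j) / fact (card J))"
    using nz by (intro integral_eq_lborel_indicator_Icc[symmetric] continuous_intros) force+
  also have "\<dots> = integral {0..1} (\<lambda>x. x ^ m / (\<Prod>j\<in>insert 0 J. 1 - x + x * z j)) / fact (card J)"
    by (rule integral_divide)
  finally show ?thesis
    unfolding q_def .
qed

lemma divdiff_eq_simplex_integral:
  assumes "length ys = Suc n"
  shows "divdiff ys f = (\<integral>t. (if in_simplex {1..n} t then (deriv ^^ n) f (simplex_comb {1..n} ((!) ys) t) else 0)
                           \<partial>PiM_lborel {1..n})"
  using assms unfolding divdiff_def in_simplex_def simplex_comb_def by simp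

lemma divdiff_eq_integral:
  fixes f :: "real \<Rightarrow> real" and ys :: "real list"
  assumes ys: "\<And>y. y \<in> set ys \<Longrightarrow> 0 < y" and len: "length ys = Suc n"
    and f: "\<And>y. 0 < y \<Longrightarrow> (deriv ^^ n) f y = K * kernel_integral (\<lambda>t. t ^ m) (Suc n) y"
  shows "divdiff ys f = K / fact n * integral {0..1} (\<lambda>x. x ^ m / prod_list (map (\<lambda>y. 1 - x + x * y) ys))"
proof -
  define J where "J = {1..n}"
  have J: "finite J" "0 \<notin> J" "card J = n" "insert 0 J = {..<length ys}"
    unfolding J_def len by auto
  have z: "0 < ys ! j" if "j \<in> insert 0 J" for j
    using that ys len unfolding J(4) by auto
  have prod: "(\<Prod>j\<in>insert 0 J. 1 - x + x * ys ! j) = prod_list (map (\<lambda>y. 1 - x + x * y) ys)" for x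
    unfolding J(4) by (simp add: prod_list_map_conv_prod_nth)
  have "divdiff ys f = (\<integral>t. K * (if in_simplex J t then kernel_integral (\<lambda>t. t ^ m) (Suc (card J))
                                                         (simplex_comb J ((!) ys) t) else 0) \<partial>PiM_lborel J)"
    unfolding divdiff_eq_simplex_integral[OF len] J_def[symmetric]
    using simplex_comb_pos[of J _ "(!) ys", OF _ J(1) z] f J(3) by (intro Bochner_Integration.integral_cong) auto
  also have "\<dots> = K * (integral {0..1} (\<lambda>x. x ^ m / (\<Prod>j\<in>insert 0 J. 1 - x + x * ys ! j)) / fact (card J))"
    by (simp only: integral_mult_right_zero integral_simplex_kernel_integral[of J "(!) ys", OF J(1,2) z])
  finally show ?thesis
    unfolding prod J(3) by simp
qed

section \<open>The divided differences of ln and L0\<close>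

lemma frakH_integrand_substitution:
  fixes t u Da Db :: real
  assumes "0 < u" "0 < Da" "0 < Db"
  shows "(t / u) ^ (a0 + a1 + a2 + 1) / ((1 / u) ^ (a0 + 1) * (Da / u) ^ (a1 + 1) * (Db / u) ^ (a2 + 1))
           * (1 / u ^ 2)
         = t ^ (a0 + a1 + a2 + 1) / (Da ^ (a1 + 1) * Db ^ (a2 + 1))"
  using assms by (simp add: power_divide field_simps power_add power2_eq_square)

lemma frakH_eq_integral:
  fixes a b :: real
  assumes a: "0 < a" and b: "0 < b"
  shows "frakH a0 a1 a2 a b
           = integral {0..1} (\<lambda>t. t ^ (a0 + a1 + a2 + 1) / ((1 - t + t * a) ^ (a1 + 1) * (1 - t + t * b) ^ (a2 + 1)))"
proof -
  define P where "P = (\<lambda>t::real. t ^ (a0 + a1 + a2 + 1) / ((1 - t + t * a) ^ (a1 + 1) * (1 - t + t * b) ^ (a2 + 1)))"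
  define h where "h = (\<lambda>x::real. x ^ (a0 + a1 + a2 + 1)
                         / ((1 + x) ^ (a0 + 1) * (1 + a * x) ^ (a1 + 1) * (1 + b * x) ^ (a2 + 1)))"
  define g where "g = (\<lambda>t::real. t / (1 - t))"
  define g' where "g' = (\<lambda>t::real. 1 / (1 - t) ^ 2)"
  have hpos: "0 < (1 + x) ^ (a0 + 1) * (1 + a * x) ^ (a1 + 1) * (1 + b * x) ^ (a2 + 1)" if "0 < x" for x
    using a b that by (simp add: add_pos_pos)
  have Pcont: "continuous_on {0..1} P"
    unfolding P_def using a b convex_comb_1_pos by (intro continuous_intros) force+
  have hgP: "h (g t) * g' t = P t" if t: "0 < t" "t < 1" for t
  proof -
    have u: "0 < 1 - t" and D: "0 < 1 - t + t * a" "0 < 1 - t + t * b"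
      using t a b convex_comb_1_pos[of t] by auto
    have "1 + t / (1 - t) = 1 / (1 - t)" "1 + a * (t / (1 - t)) = (1 - t + t * a) / (1 - t)"
         "1 + b * (t / (1 - t)) = (1 - t + t * b) / (1 - t)"
      using u by (simp_all add: field_simps)
    then show ?thesis
      unfolding h_def g_def g'_def P_def using frakH_integrand_substitution[OF u D] by simp
  qed
  have "frakH a0 a1 a2 a b = (LBINT x=ereal 0..\<infinity>. h x)"
    unfolding frakH_def h_def by (simp add: interval_lebesgue_integral_def)
  also have "\<dots> = (LBINT x=ereal 0..ereal 1. h (g x) * g' x)"
  proof (rule interval_integral_substitution_nonneg(2))
    fix x assume "ereal 0 < ereal x" "ereal x < ereal 1"
    then have x: "0 < x" "x < 1"
      by auto
    show "DERIV g x :> g' x"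
      unfolding g_def g'_def using x
      by (auto intro!: derivative_eq_intros simp: power2_eq_square field_simps)
    have gx: "0 < g x"
      unfolding g_def using x by simp
    show "isCont h (g x)"
      unfolding h_def using hpos[OF gx] by (intro continuous_intros) auto
    show "isCont g' x"
      unfolding g'_def using x by (intro continuous_intros) auto
    show "0 \<le> h (g x)"
      unfolding h_def using hpos[OF gx] gx by simp
  next
    show "((ereal \<circ> g \<circ> real_of_ereal) \<longlongrightarrow> ereal 0) (at_right (ereal 0))"
      unfolding g_def by (auto simp: ereal_tendsto_simps intro!: tendsto_eq_intros)
    show "((ereal \<circ> g \<circ> real_of_ereal) \<longlongrightarrow> \<infinity>) (at_left (ereal 1))"
      unfolding g_def ereal_tendsto_simps by real_asymp
    have "set_integrable lborel (einterval (ereal 0) (ereal 1)) P"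
      by (rule set_integrable_subset[OF borel_integrable_atLeastAtMost'[OF Pcont]]) auto
    then show "set_integrable lborel (einterval (ereal 0) (ereal 1)) (\<lambda>x. h (g x) * g' x)"
      by (rule iffD1[OF set_integrable_cong, rotated 3]) (auto simp: hgP)
  qed (auto simp: g'_def)
  also have "\<dots> = (LBINT x=ereal 0..ereal 1. P x)"
    by (rule interval_integral_cong) (auto simp: hgP)
  also have "\<dots> = integral {0..1} P"
    by (rule interval_integral_eq_integral) (auto intro: borel_integrable_atLeastAtMost'[OF Pcont])
  finally show ?thesis
    unfolding P_def .
qed

lemma kernel_integral_const_2:
  fixes y :: real
  assumes y: "0 < y"
  shows "kernel_integral (\<lambda>_. 1) 2 y = 1 / y"
proof -
  have "((\<lambda>t. 1 / (1 - t + t * y) ^ 2) has_integral (1 / (1 - 1 + 1 * y) - 0 / (1 - 0 + 0 * y))) {0..1}"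
  proof (rule fundamental_theorem_of_calculus)
    fix t :: real assume t: "t \<in> {0..1}"
    have D: "0 < 1 - t + t * y"
      using t y convex_comb_1_pos by auto
    have "((\<lambda>t. 1 - t + t * y) has_real_derivative (y - 1)) (at t within {0..1})"
      by (auto intro!: derivative_eq_intros)
    from DERIV_quotient[OF DERIV_ident this]
    have "((\<lambda>t. t / (1 - t + t * y)) has_real_derivative
            (1 * (1 - t + t * y) - (y - 1) * t) / (1 - t + t * y) ^ Suc (Suc 0)) (at t within {0..1})"
      using D by simp
    moreover have "(1 * (1 - t + t * y) - (y - 1) * t) / (1 - t + t * y) ^ Suc (Suc 0) = 1 / (1 - t + t * y) ^ 2"
      by (simp add: algebra_simps power2_eq_square)
    ultimately show "((\<lambda>t. t / (1 - t + t * y)) has_vector_derivative 1 / (1 - t + t * y) ^ 2) (at t within {0..1})"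
      by (simp add: has_real_derivative_iff_has_vector_derivative)
  qed simp
  then show ?thesis
    unfolding kernel_integral_def by (simp add: integral_unique)
qed

lemma kernel_integral_const_1:
  fixes y :: real
  assumes y: "0 < y"
  shows "kernel_integral (\<lambda>_. 1) 1 y = L0 y"
proof (cases "y = 1")
  case True
  then show ?thesis
    by (simp add: kernel_integral_def L0_def)
next
  case False
  have "((\<lambda>t. 1 / (1 - t + t * y) ^ 1) has_integral (ln (1 - 1 + 1 * y) / (y - 1) - ln (1 - 0 + 0 * y) / (y - 1))) {0..1}"
  proof (rule fundamental_theorem_of_calculus)
    fix t :: real assume t: "t \<in> {0..1}"
    have D: "0 < 1 - t + t * y"
      using t y convex_comb_1_pos by auto
    have "((\<lambda>t. 1 - t + t * y) has_real_derivative (y - 1)) (at t within {0..1})"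
      by (auto intro!: derivative_eq_intros)
    from DERIV_cdivide[OF DERIV_chain2[OF DERIV_ln_divide[OF D] this], of "y - 1"]
    show "((\<lambda>t. ln (1 - t + t * y) / (y - 1)) has_vector_derivative 1 / (1 - t + t * y) ^ 1) (at t within {0..1})"
      using False by (simp add: has_real_derivative_iff_has_vector_derivative)
  qed simp
  then show ?thesis
    unfolding kernel_integral_def L0_def using False by (simp add: integral_unique)
qed

lemma higher_deriv_ln:
  fixes y :: real
  assumes "0 < y"
  shows "(deriv ^^ Suc k) ln y = (-1) ^ k * fact (Suc k) * kernel_integral (\<lambda>t. t ^ k) (Suc (Suc k)) y"
proof -
  have "deriv ln x = kernel_integral (\<lambda>_. 1) 2 x" if "x \<in> {0<..}" for x :: real
    using DERIV_imp_deriv[OF DERIV_ln_divide, of x] kernel_integral_const_2[of x] that by simp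
  then have "(deriv ^^ k) (deriv ln) y
               = (-1) ^ k * pochhammer (real 2) k * kernel_integral (\<lambda>t. t ^ k * 1) (2 + k) y"
    using assms by (intro higher_deriv_eq_kernel_integral[of "{0<..}"]) auto
  moreover have "pochhammer (real 2) k = fact (Suc k)"
    by (simp add: pochhammer_fact pochhammer_rec)
  ultimately show ?thesis
    by (simp add: funpow_Suc_right del: funpow.simps)
qed

lemma higher_deriv_L0:
  fixes y :: real
  assumes "0 < y"
  shows "(deriv ^^ k) L0 y = (-1) ^ k * fact k * kernel_integral (\<lambda>t. t ^ k) (Suc k) y"
proof -
  have "(deriv ^^ k) L0 y = (-1) ^ k * pochhammer (real 1) k * kernel_integral (\<lambda>t. t ^ k * 1) (1 + k) y"
    using assms kernel_integral_const_1 by (intro higher_deriv_eq_kernel_integral[of "{0<..}"]) auto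
  then show ?thesis
    by (simp add: pochhammer_fact)
qed

lemma prod_list_map_replicate3:
  "prod_list (map g (replicate k x @ replicate l y @ replicate q w)) = g x ^ k * (g y ^ l * g w ^ q)"
  by (simp add: prod_list_replicate)

lemma dd3_ln_eq_frakH:
  fixes a b :: real
  assumes "0 < a" "0 < b"
  shows "dd3 (a0 + 1) a (a1 + 1) b (a2 + 1) ln = (-1) ^ (a0 + a1 + a2 + 1) * frakH a0 a1 a2 a b"
proof -
  define N where "N = a0 + a1 + a2"
  define ys where "ys = replicate (a0 + 1) 1 @ replicate (a1 + 1) a @ replicate (a2 + 1) b"
  have "divdiff ys ln = (-1) ^ Suc N * fact (Suc (Suc N)) / fact (Suc (Suc N))
                          * integral {0..1} (\<lambda>x. x ^ Suc N / prod_list (map (\<lambda>y. 1 - x + x * y) ys))"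
  proof (rule divdiff_eq_integral)
    show "\<And>y. y \<in> set ys \<Longrightarrow> 0 < y" "length ys = Suc (Suc (Suc N))"
      using assms by (auto simp: ys_def N_def)
  qed (rule higher_deriv_ln)
  then show ?thesis
    unfolding dd3_def frakH_eq_integral[OF assms] by (simp add: ys_def N_def prod_list_map_replicate3 mult.assoc)
qed

lemma dd3_L0_eq_frakH:
  fixes a b :: real
  assumes "0 < a" "0 < b"
  shows "dd3 a0 a (a1 + 1) b (a2 + 1) L0 = (-1) ^ (a0 + a1 + a2 + 1) * frakH a0 a1 a2 a b"
proof -
  define N where "N = a0 + a1 + a2"
  define ys where "ys = replicate a0 1 @ replicate (a1 + 1) a @ replicate (a2 + 1) b"
  have "divdiff ys L0 = (-1) ^ Suc N * fact (Suc N) / fact (Suc N)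
                          * integral {0..1} (\<lambda>x. x ^ Suc N / prod_list (map (\<lambda>y. 1 - x + x * y) ys))"
  proof (rule divdiff_eq_integral)
    show "\<And>y. y \<in> set ys \<Longrightarrow> 0 < y" "length ys = Suc (Suc N)"
      using assms by (auto simp: ys_def N_def)
  qed (rule higher_deriv_L0)
  then show ?thesis
    unfolding dd3_def frakH_eq_integral[OF assms] by (simp add: ys_def N_def prod_list_map_replicate3 mult.assoc)
qed

lemma Lmod_eq_kernel_integral:
  fixes s :: real
  assumes s: "0 < s"
  shows "Lmod r s = kernel_integral (\<lambda>t. t ^ r) 1 s"
proof (cases "r = 0")
  case True
  then show ?thesis
    using kernel_integral_const_1[OF s] by (simp add: Lmod_def)
next
  case False
  define ys where "ys = replicate (r + 1) 1 @ [s]"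
  have "divdiff ys ln = (-1) ^ r * fact (Suc r) / fact (Suc r)
                          * integral {0..1} (\<lambda>x. x ^ r / prod_list (map (\<lambda>y. 1 - x + x * y) ys))"
  proof (rule divdiff_eq_integral)
    show "\<And>y. y \<in> set ys \<Longrightarrow> 0 < y" "length ys = Suc (Suc r)"
      using s by (auto simp: ys_def)
  qed (rule higher_deriv_ln)
  then have "divdiff ys ln = (-1) ^ r * kernel_integral (\<lambda>t. t ^ r) 1 s"
    by (simp add: ys_def prod_list_replicate kernel_integral_def)
  then show ?thesis
    using False by (simp add: Lmod_def ys_def)
qed

section \<open>Derivatives of the difference quotient of the modified logarithm\<close>

lemma Lmod_difference_quotient:
  fixes a b :: real
  assumes a: "0 < a" and b: "0 < b" and ab: "a \<noteq> b"
  shows "(Lmod r b - Lmod r a) / (b - a) = kernel_integral (\<lambda>t. - (t ^ Suc r / (1 - t + t * a))) 1 b"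
proof -
  have "continuous_on {0..1} (\<lambda>t::real. t ^ r)"
    by (intro continuous_intros)
  then have "Lmod r b - Lmod r a = integral {0..1} (\<lambda>t. t ^ r / (1 - t + t * b) ^ 1 - t ^ r / (1 - t + t * a) ^ 1)"
    unfolding Lmod_eq_kernel_integral[OF b] Lmod_eq_kernel_integral[OF a] kernel_integral_def
    using a b by (intro integral_diff[symmetric] kernel_integrand_integrable)
  also have "\<dots> = integral {0..1} (\<lambda>t. (b - a) * (- (t ^ Suc r / (1 - t + t * a)) / (1 - t + t * b) ^ 1))"
  proof (rule integral_cong)
    fix t :: real assume "t \<in> {0..1}"
    then have "0 < 1 - t + t * a" "0 < 1 - t + t * b"
      using a b convex_comb_1_pos by auto
    moreover have "1 - t + t * b = (1 - t + t * a) + t * (b - a)"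
      by (simp add: algebra_simps)
    moreover have "D \<noteq> 0 \<Longrightarrow> D + t * d \<noteq> 0
                     \<Longrightarrow> t ^ r / (D + t * d) ^ 1 - t ^ r / D ^ 1 = d * (- (t ^ Suc r / D) / (D + t * d) ^ 1)"
      for D d :: real
      by (simp add: field_simps)
    ultimately show "t ^ r / (1 - t + t * b) ^ 1 - t ^ r / (1 - t + t * a) ^ 1
                       = (b - a) * (- (t ^ Suc r / (1 - t + t * a)) / (1 - t + t * b) ^ 1)"
      by (metis less_irrefl)
  qed
  also have "\<dots> = (b - a) * kernel_integral (\<lambda>t. - (t ^ Suc r / (1 - t + t * a))) 1 b"
    unfolding kernel_integral_def by (rule integral_mult_right)
  finally show ?thesis
    using ab by simp
qed

lemma higher_deriv_Lmod_difference_quotient: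
  fixes a b :: real
  assumes a: "0 < a" and b: "0 < b" and ab: "a \<noteq> b"
  shows "(deriv ^^ k) (\<lambda>b'. (Lmod r b' - Lmod r a) / (b' - a)) b
           = kernel_integral (\<lambda>t. (-1) ^ Suc k * fact k * (t ^ (k + Suc r) / (1 - t + t * b) ^ Suc k)) 1 a"
proof -
  define c where "c = (\<lambda>t::real. - (t ^ Suc r / (1 - t + t * a)))"
  have "continuous_on {0..1} c"
    unfolding c_def using a convex_comb_1_pos by (intro continuous_intros) force+
  then have "(deriv ^^ k) (\<lambda>b'. (Lmod r b' - Lmod r a) / (b' - a)) b
               = (-1) ^ k * pochhammer (real 1) k * kernel_integral (\<lambda>t. t ^ k * c t) (1 + k) b"
    using a b ab Lmod_difference_quotient[of a _ r]
    by (intro higher_deriv_eq_kernel_integral[of "{0<..} - {a}"]) (auto simp: c_def)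
  also have "\<dots> = integral {0..1} (\<lambda>t. (-1) ^ k * pochhammer (real 1) k * (t ^ k * c t / (1 - t + t * b) ^ (1 + k)))"
    unfolding kernel_integral_def by (rule integral_mult_right[symmetric])
  also have "\<dots> = kernel_integral (\<lambda>t. (-1) ^ Suc k * fact k * (t ^ (k + Suc r) / (1 - t + t * b) ^ Suc k)) 1 a"
    unfolding kernel_integral_def
  proof (rule integral_cong)
    fix t :: real assume "t \<in> {0..1}"
    then have "0 < 1 - t + t * a" "0 < 1 - t + t * b"
      using a b convex_comb_1_pos by auto
    then show "(-1) ^ k * pochhammer (real 1) k * (t ^ k * c t / (1 - t + t * b) ^ (1 + k))
                 = (-1) ^ Suc k * fact k * (t ^ (k + Suc r) / (1 - t + t * b) ^ Suc k) / (1 - t + t * a) ^ 1"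
      unfolding c_def pochhammer_fact by (simp add: field_simps power_add)
  qed
  finally show ?thesis .
qed

lemma higher_deriv2_Lmod_difference_quotient:
  fixes a b :: real
  assumes a: "0 < a" and b: "0 < b" and ab: "a \<noteq> b"
  shows "(deriv ^^ a1) (\<lambda>a'. (deriv ^^ a2) (\<lambda>b'. (Lmod a0 b' - Lmod a0 a') / (b' - a')) b) a
           = (-1) ^ (a1 + a2 + 1) * fact a1 * fact a2 * frakH a0 a1 a2 a b"
proof -
  define c where "c = (\<lambda>t::real. (-1) ^ Suc a2 * fact a2 * (t ^ (a2 + Suc a0) / (1 - t + t * b) ^ Suc a2))"
  have "continuous_on {0..1} c"
    unfolding c_def using b convex_comb_1_pos by (intro continuous_intros) force+
  then have "(deriv ^^ a1) (\<lambda>a'. (deriv ^^ a2) (\<lambda>b'. (Lmod a0 b' - Lmod a0 a') / (b' - a')) b) a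
               = (-1) ^ a1 * pochhammer (real 1) a1 * kernel_integral (\<lambda>t. t ^ a1 * c t) (1 + a1) a"
    using a b ab higher_deriv_Lmod_difference_quotient[of _ b a2 a0]
    by (intro higher_deriv_eq_kernel_integral[of "{0<..} - {b}"]) (auto simp: c_def)
  also have "\<dots> = integral {0..1} (\<lambda>t. (-1) ^ a1 * pochhammer (real 1) a1 * (t ^ a1 * c t / (1 - t + t * a) ^ (1 + a1)))"
    unfolding kernel_integral_def by (rule integral_mult_right[symmetric])
  also have "\<dots> = integral {0..1} (\<lambda>t. (-1) ^ (a1 + a2 + 1) * fact a1 * fact a2
                      * (t ^ (a0 + a1 + a2 + 1) / ((1 - t + t * a) ^ (a1 + 1) * (1 - t + t * b) ^ (a2 + 1))))"
  proof (rule integral_cong)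
    fix t :: real assume "t \<in> {0..1}"
    then have "0 < 1 - t + t * a" "0 < 1 - t + t * b"
      using a b convex_comb_1_pos by auto
    then show "(-1) ^ a1 * pochhammer (real 1) a1 * (t ^ a1 * c t / (1 - t + t * a) ^ (1 + a1))
                 = (-1) ^ (a1 + a2 + 1) * fact a1 * fact a2
                   * (t ^ (a0 + a1 + a2 + 1) / ((1 - t + t * a) ^ (a1 + 1) * (1 - t + t * b) ^ (a2 + 1)))"
      unfolding c_def pochhammer_fact by (simp add: field_simps power_add)
  qed
  also have "\<dots> = (-1) ^ (a1 + a2 + 1) * fact a1 * fact a2 * frakH a0 a1 a2 a b"
    unfolding frakH_eq_integral[OF a b] by (rule integral_mult_right)
  finally show ?thesis .
qed

theorem mainTheorem16:
  fixes a0 a1 a2 :: nat and a b :: real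
  assumes "a > 0" and "b > 0" and "a \<noteq> b"
  shows "frakH a0 a1 a2 a b = (-1) ^ (a0 + a1 + a2 + 1) * dd3 (a0 + 1) a (a1 + 1) b (a2 + 1) ln
       \<and> frakH a0 a1 a2 a b = (-1) ^ (a0 + a1 + a2 + 1) * dd3 a0 a (a1 + 1) b (a2 + 1) L0
       \<and> frakH a0 a1 a2 a b = (-1) ^ (a0 + a1 + a2 + a0 + 1) / (fact a1 * fact a2) *
            (deriv ^^ a1) (\<lambda>a'. (deriv ^^ a2) (\<lambda>b'. (Lmod a0 b' - Lmod a0 a') / (b' - a')) b) a
       \<and> frakH a0 0 0 a b = - ((Lmod a0 b - Lmod a0 a) / (b - a))"
proof -
  have derivs: "frakH a0 a1 a2 a b = (-1) ^ (a0 + a1 + a2 + a0 + 1) / (fact a1 * fact a2) *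
                  (deriv ^^ a1) (\<lambda>a'. (deriv ^^ a2) (\<lambda>b'. (Lmod a0 b' - Lmod a0 a') / (b' - a')) b) a"
    for a1 a2
  proof -
    have "(-1 :: real) ^ (a0 + a1 + a2 + a0 + 1) * (-1) ^ (a1 + a2 + 1) = 1"
      using minus_one_mult_self[of "a0 + a1 + a2 + 1"] by (simp add: power_add[symmetric] ac_simps)
    then show ?thesis
      unfolding higher_deriv2_Lmod_difference_quotient[OF assms] by simp
  qed
  show ?thesis
    using dd3_ln_eq_frakH[OF assms(1,2)] dd3_L0_eq_frakH[OF assms(1,2)] derivs[of 0 0] derivs
    by (simp add: mult.assoc[symmetric])
qed

end
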